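(* For every $0<t\le T$, the mapping $\Lambda$ maps $L^2([0,t])\times\mathcal{K}_t$ into itself.
   Context: Take $\lambda=1$, $J\in\mathbb{R}$, $\sigma>0$, $T>0$, and either the H-model ($g(y)=-\alpha y$, $\alpha>0$, $f$ a bounded continuous sigmoidal function, $\mu_0$ a probability law on $\mathbb{R}$) or the S-model ($f(y)=y$, $A>1$, $\mu_0$ with compact support in $(-A,A)$, $g=-U'$ with $U$ $C^2$ on $(-A,A)$ blowing up at $\pm A$ so that $k_U(x)=2\int_0^xe^{2U(y)}\int_0^ye^{-2U(z)}dz\,dy\to\infty$ as $|x|\to A$). For $0<t\le T$, $\mathcal{K}_t$ is the set of trace-class operators $\bar K$ on $L^2([0,t])$ whose kernel $K$ is a correlation function (symmetric, positive semidefinite, $\int_0^tK(s,s)ds<\infty$), $(\bar K\psi)(s)=\int_0^tK(s,u)\psi(u)du$. Given $(m,\bar K)\in L^2([0,T])\times\mathcal{K}_T$: for each $t$, $\tilde K^t$ is the kernel of $\bar K^t\circ(\mathrm{Id}+\bar K^t)^{-1}$ on $L^2([0,t])$ ($\bar K^t$ the operator with kernel $K$ restricted to $[0,t]^2$); $\kappa(t,s)=\tilde K^t(t,s)\mathbbm 1_{s\le t}$; $H=\sum_{n\ge0}\kappa^{(n+1)}$ with $\kappa^{(1)}=\kappa$, $\kappa^{(n+1)}(t,s)=\int_s^t\kappa(t,v)\kappa^{(n)}(v,s)dv$; $W$ is a Brownian motion, $X_0\sim\mu_0$ independent of $W$, and $\widetilde W_t=\int_0^t\kappa(t,s)dW_s$.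 $X^{m,\bar K}$ is the solution of \[X_t=X_0+\int_0^tg(X_s)ds+J\int_0^tm(s)ds+W_t+\int_0^t\widetilde W_sds+\int_0^t\Big(\int_0^sH(s,u)\widetilde W_udu\Big)ds.\] Then $\Lambda(m,\bar K)=\big(t\mapsto\mathbb{E}[f(X^{m,\bar K}_t)],\ (t,s)\mapsto\sigma^2\mathbb{E}[f(X^{m,\bar K}_t)f(X^{m,\bar K}_s)]\big)$, the second component viewed as the kernel of an operator; the same definition applies on $[0,t]$ in place of $[0,T]$. *)

theory Defs
  imports "HOL-Probability.Probability"
begin

definition in_L2 :: "real \<Rightarrow> (real \<Rightarrow> real) \<Rightarrow> bool" where
  "in_L2 t h \<longleftrightarrow>
     (\<lambda>s. indicator {0..t} s * h s) \<in> borel_measurable lborel \<and>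
     set_integrable lborel {0..t} (\<lambda>s. (h s)\<^sup>2)"

text \<open>The set K_t, represented by kernels: K is a correlation function on [0,t]^2
  (measurable, symmetric, positive semidefinite, integrable diagonal).  The integral
  operator of such a kernel is trace class.\<close>
definition corr_kernels :: "real \<Rightarrow> (real \<Rightarrow> real \<Rightarrow> real) set" where
  "corr_kernels t = {K.
     (\<lambda>p. indicator ({0..t} \<times> {0..t}) p * K (fst p) (snd p))
        \<in> borel_measurable (lborel \<Otimes>\<^sub>M lborel) \<and>
     (\<forall>s\<in>{0..t}. \<forall>u\<in>{0..t}. K s u = K u s) \<and>
     (\<forall>(n::nat) (x::nat \<Rightarrow> real) (c::nat \<Rightarrow> real). (\<forall>i<n. x i \<in> {0..t}) \<longrightarrow>
         0 \<le> (\<Sum>i<n. \<Sum>j<n. c i * c j * K (x i) (x j))) \<and>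
     set_integrable lborel {0..t} (\<lambda>s. K s s)}"

text \<open>R is the kernel of \<open>K^t (Id + K^t)^{-1}\<close> on L2([0,t]): a square-integrable kernel
  with \<open>R + K^t R = K^t\<close> (as kernels, a.e. on [0,t]^2).\<close>
definition res_kernel :: "(real \<Rightarrow> real \<Rightarrow> real) \<Rightarrow> real \<Rightarrow> (real \<Rightarrow> real \<Rightarrow> real) \<Rightarrow> bool" where
  "res_kernel K t R \<longleftrightarrow>
     (\<lambda>p. indicator ({0..t} \<times> {0..t}) p * R (fst p) (snd p))
        \<in> borel_measurable (lborel \<Otimes>\<^sub>M lborel) \<and>
     set_integrable (lborel \<Otimes>\<^sub>M lborel) ({0..t} \<times> {0..t}) (\<lambda>p. (R (fst p) (snd p))\<^sup>2) \<and>
     (AE p in lborel \<Otimes>\<^sub>M lborel. p \<in> {0..t} \<times> {0..t} \<longrightarrow>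
        R (fst p) (snd p) + (LINT v:{0..t}|lborel. K (fst p) v * R v (snd p)) = K (fst p) (snd p))"

text \<open>\<open>\<kappa>(t,s) = K~^t(t,s) 1_{s \<le> t}\<close>, where the value of the resolvent kernel on the
  line a = t is given by the resolvent equation
  \<open>K~^t(t,s) = K(t,s) - \<integral>_0^t K(t,v) K~^t(v,s) dv\<close> (for a.e. s in [0,t]).\<close>
definition is_kappa :: "real \<Rightarrow> (real \<Rightarrow> real \<Rightarrow> real) \<Rightarrow> (real \<Rightarrow> real \<Rightarrow> real) \<Rightarrow> bool" where
  "is_kappa T K \<kappa> \<longleftrightarrow>
     (\<lambda>p. \<kappa> (fst p) (snd p)) \<in> borel_measurable (lborel \<Otimes>\<^sub>M lborel) \<and>
     (\<forall>t s. t < s \<longrightarrow> \<kappa> t s = 0) \<and>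
     (\<forall>t\<in>{0<..T}. \<exists>R. res_kernel K t R \<and>
        (AE s in lborel. s \<in> {0..t} \<longrightarrow>
           \<kappa> t s = K t s - (LINT v:{0..t}|lborel. K t v * R v s)))"

text \<open>\<open>kpow \<kappa> n = \<kappa>^{(n+1)}\<close>.\<close>
fun kpow :: "(real \<Rightarrow> real \<Rightarrow> real) \<Rightarrow> nat \<Rightarrow> real \<Rightarrow> real \<Rightarrow> real" where
  "kpow \<kappa> 0 = \<kappa>"
| "kpow \<kappa> (Suc n) = (\<lambda>t s. LINT v:{s..t}|lborel. \<kappa> t v * kpow \<kappa> n v s)"

definition H_kernel :: "(real \<Rightarrow> real \<Rightarrow> real) \<Rightarrow> real \<Rightarrow> real \<Rightarrow> real" where
  "H_kernel \<kappa> t s = (\<Sum>n. kpow \<kappa> n t s)"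

definition brownian :: "'a measure \<Rightarrow> (real \<Rightarrow> 'a \<Rightarrow> real) \<Rightarrow> bool" where
  "brownian M W \<longleftrightarrow> prob_space M \<and>
     (\<forall>t. W t \<in> borel_measurable M) \<and>
     (AE \<omega> in M. W 0 \<omega> = 0 \<and> continuous_on {0..} (\<lambda>t. W t \<omega>)) \<and>
     (\<forall>s t. 0 \<le> s \<and> s < t \<longrightarrow>
        distributed M lborel (\<lambda>\<omega>. W t \<omega> - W s \<omega>)
          (\<lambda>x. ennreal (normal_density 0 (sqrt (t - s)) x))) \<and>
     (\<forall>(n::nat) (ts::nat \<Rightarrow> real). 0 \<le> ts 0 \<and> (\<forall>i<n. ts i < ts (Suc i)) \<longrightarrow>
        prob_space.indep_vars M (\<lambda>_. borel) (\<lambda>i \<omega>. W (ts (Suc i)) \<omega> - W (ts i) \<omega>) {..<n})"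

definition step_fun :: "(real \<times> real \<times> real) list \<Rightarrow> real \<Rightarrow> real" where
  "step_fun ps s = (\<Sum>(a,b,c)\<leftarrow>ps. c * indicator {a<..b} s)"

definition step_int :: "(real \<Rightarrow> 'a \<Rightarrow> real) \<Rightarrow> (real \<times> real \<times> real) list \<Rightarrow> 'a \<Rightarrow> real" where
  "step_int W ps \<omega> = (\<Sum>(a,b,c)\<leftarrow>ps. c * (W b \<omega> - W a \<omega>))"

text \<open>Y is (a version of) the Wiener integral \<open>\<integral>_0^t h(s) dW_s\<close> of h in L2([0,t]):
  the L2(M)-limit of the integrals of step functions converging to h in L2([0,t]).\<close>
definition wiener_int :: "'a measure \<Rightarrow> (real \<Rightarrow> 'a \<Rightarrow> real) \<Rightarrow> real \<Rightarrow> (real \<Rightarrow> real) \<Rightarrow> ('a \<Rightarrow> real) \<Rightarrow> bool" where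
  "wiener_int M W t h Y \<longleftrightarrow>
     in_L2 t h \<and> Y \<in> borel_measurable M \<and> integrable M (\<lambda>\<omega>. (Y \<omega>)\<^sup>2) \<and>
     (\<exists>ps :: nat \<Rightarrow> (real \<times> real \<times> real) list.
        (\<forall>n. \<forall>(a,b,c)\<in>set (ps n). 0 \<le> a \<and> a \<le> b \<and> b \<le> t) \<and>
        ((\<lambda>n. LINT s:{0..t}|lborel. (step_fun (ps n) s - h s)\<^sup>2) \<longlonglongrightarrow> 0) \<and>
        ((\<lambda>n. LINT \<omega>|M. (step_int W (ps n) \<omega> - Y \<omega>)\<^sup>2) \<longlonglongrightarrow> 0))"

definition is_Wtilde :: "'a measure \<Rightarrow> (real \<Rightarrow> 'a \<Rightarrow> real) \<Rightarrow> real \<Rightarrow> (real \<Rightarrow> real \<Rightarrow> real) \<Rightarrow> (real \<Rightarrow> 'a \<Rightarrow> real) \<Rightarrow> bool" where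
  "is_Wtilde M W T \<kappa> Wt \<longleftrightarrow>
     (\<lambda>p. Wt (fst p) (snd p)) \<in> borel_measurable (lborel \<Otimes>\<^sub>M M) \<and>
     (\<forall>t\<in>{0..T}. wiener_int M W t (\<kappa> t) (Wt t))"

definition init_cond :: "'a measure \<Rightarrow> ('a \<Rightarrow> real) \<Rightarrow> (real \<Rightarrow> 'a \<Rightarrow> real) \<Rightarrow> real measure \<Rightarrow> bool" where
  "init_cond M X0 W \<mu>0 \<longleftrightarrow>
     X0 \<in> borel_measurable M \<and> distr M borel X0 = \<mu>0 \<and>
     prob_space.indep_set M
       (sigma_sets (space M) {X0 -` B \<inter> space M | B. B \<in> sets borel})
       (sigma_sets (space M) {W t -` B \<inter> space M | t B. 0 \<le> t \<and> B \<in> sets borel})"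

definition is_solution ::
  "'a measure \<Rightarrow> real \<Rightarrow> real set \<Rightarrow> (real \<Rightarrow> real) \<Rightarrow> real \<Rightarrow> (real \<Rightarrow> real) \<Rightarrow>
   ('a \<Rightarrow> real) \<Rightarrow> (real \<Rightarrow> 'a \<Rightarrow> real) \<Rightarrow> (real \<Rightarrow> 'a \<Rightarrow> real) \<Rightarrow> (real \<Rightarrow> real \<Rightarrow> real) \<Rightarrow>
   (real \<Rightarrow> 'a \<Rightarrow> real) \<Rightarrow> bool" where
  "is_solution M T D g J m X0 W Wt H X \<longleftrightarrow>
     (\<forall>t\<in>{0..T}. X t \<in> borel_measurable M) \<and>
     (AE \<omega> in M. \<forall>t\<in>{0..T}.
        X t \<omega> \<in> D \<and>
        set_integrable lborel {0..t} (\<lambda>s. g (X s \<omega>)) \<and>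
        set_integrable lborel {0..t} (\<lambda>s. Wt s \<omega>) \<and>
        set_integrable lborel {0..t} (\<lambda>s. LINT u:{0..s}|lborel. H s u * Wt u \<omega>) \<and>
        (\<forall>s\<in>{0..t}. set_integrable lborel {0..s} (\<lambda>u. H s u * Wt u \<omega>)) \<and>
        X t \<omega> = X0 \<omega> + (LINT s:{0..t}|lborel. g (X s \<omega>)) + J * (LINT s:{0..t}|lborel. m s)
                 + W t \<omega> + (LINT s:{0..t}|lborel. Wt s \<omega>)
                 + (LINT s:{0..t}|lborel. LINT u:{0..s}|lborel. H s u * Wt u \<omega>))"

definition sigmoidal :: "(real \<Rightarrow> real) \<Rightarrow> bool" where
  "sigmoidal f \<longleftrightarrow> mono f \<and> (\<exists>a b. (f \<longlongrightarrow> a) at_bot \<and> (f \<longlongrightarrow> b) at_top)"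

definition prob_law :: "real measure \<Rightarrow> bool" where
  "prob_law \<mu> \<longleftrightarrow> prob_space \<mu> \<and> sets \<mu> = sets borel"

definition H_model :: "real \<Rightarrow> (real \<Rightarrow> real) \<Rightarrow> (real \<Rightarrow> real) \<Rightarrow> real measure \<Rightarrow> bool" where
  "H_model \<alpha> f g \<mu>0 \<longleftrightarrow> \<alpha> > 0 \<and> (\<forall>y. g y = - \<alpha> * y) \<and>
     bounded (range f) \<and> continuous_on UNIV f \<and> sigmoidal f \<and> prob_law \<mu>0"

definition kU :: "(real \<Rightarrow> real) \<Rightarrow> real \<Rightarrow> real" where
  "kU U x = 2 * (LBINT y=0..x. exp (2 * U y) * (LBINT z=0..y. exp (- 2 * U z)))"

definition S_model :: "real \<Rightarrow> (real \<Rightarrow> real) \<Rightarrow> (real \<Rightarrow> real) \<Rightarrow> (real \<Rightarrow> real) \<Rightarrow> real measure \<Rightarrow> bool" where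
  "S_model A U f g \<mu>0 \<longleftrightarrow> A > 1 \<and> (\<forall>y. f y = y) \<and> prob_law \<mu>0 \<and>
     (\<exists>c. 0 \<le> c \<and> c < A \<and> emeasure \<mu>0 {-c..c} = 1) \<and>
     (\<exists>U' U''. (\<forall>x\<in>{-A<..<A}. (U has_real_derivative U' x) (at x) \<and>
                               (U' has_real_derivative U'' x) (at x)) \<and>
               continuous_on {-A<..<A} U'' \<and>
               (\<forall>x\<in>{-A<..<A}. g x = - U' x)) \<and>
     filterlim U at_top (at_left A) \<and> filterlim U at_top (at_right (-A)) \<and>
     filterlim (kU U) at_top (at_left A) \<and> filterlim (kU U) at_top (at_right (-A))"

end

theory Submission
  imports Defs
begin

text \<open>Every term on the right-hand side of the integral equation is continuous in the time
  variable, so almost every path of the solution is continuous on [0,t] and stays in the state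
  space D.  In both models f is continuous and bounded on D, so the process f(X) has bounded
  continuous paths.  Dominated convergence then makes its mean and its second-moment kernel
  continuous, hence square integrable on the compact [0,t] resp. [0,t]^2, and the kernel is
  positive semidefinite because its quadratic forms are second moments
  \<open>E[(\<Sum>\<^sub>i c\<^sub>i f(X(x\<^sub>i)))\<^sup>2]\<close>.\<close>

lemma set_integrable_if_in_L2:
  assumes "in_L2 t h"
  shows "set_integrable lborel {0..t} h"
proof (rule set_integrable_bound)
  show "set_integrable lborel {0..t} (\<lambda>s. 1 + (h s)\<^sup>2)"
    using assms unfolding in_L2_def
    by (intro set_integral_add) (auto intro: borel_integrable_atLeastAtMost')
  show "set_borel_measurable lborel {0..t} h"
    using assms unfolding in_L2_def set_borel_measurable_def by simp
  have "\<bar>x\<bar> \<le> 1 + x\<^sup>2" for x :: real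
    using zero_le_power2[of "\<bar>x\<bar> - 1"] by (simp add: power2_diff)
  then show "AE s in lborel. s \<in> {0..t} \<longrightarrow> norm (h s) \<le> norm (1 + (h s)\<^sup>2)"
    by (intro AE_I2) auto
qed

lemma continuous_on_set_integral_Icc_upper:
  fixes h :: "real \<Rightarrow> real"
  assumes "set_integrable lborel {0..t} h"
  shows "continuous_on {0..t} (\<lambda>\<tau>. LINT s:{0..\<tau>}|lborel. h s)"
proof (rule continuous_on_eq)
  show "continuous_on {0..t} (\<lambda>\<tau>. integral {0..\<tau>} h)"
    using set_borel_integral_eq_integral(1)[OF assms] by (rule indefinite_integral_continuous_1)
  fix \<tau> assume "\<tau> \<in> {0..t}"
  then have "set_integrable lborel {0..\<tau>} h"
    by (intro set_integrable_subset[OF assms]) auto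
  then show "integral {0..\<tau>} h = (LINT s:{0..\<tau>}|lborel. h s)"
    by (simp add: set_borel_integral_eq_integral(2))
qed

lemma solution_paths_continuous:
  assumes X: "is_solution M t D g J m X0 W Wt H X"
    and m: "set_integrable lborel {0..t} m"
    and W: "AE \<omega> in M. continuous_on {0..} (\<lambda>\<tau>. W \<tau> \<omega>)"
    and "0 \<le> t"
  shows "AE \<omega> in M. (\<forall>s\<in>{0..t}. X s \<omega> \<in> D) \<and> continuous_on {0..t} (\<lambda>s. X s \<omega>)"
  using W X[unfolded is_solution_def, THEN conjunct2]
proof eventually_elim
  case (elim \<omega>)
  with \<open>0 \<le> t\<close> have
    "set_integrable lborel {0..t} (\<lambda>s. g (X s \<omega>))"
    "set_integrable lborel {0..t} (\<lambda>s. Wt s \<omega>)"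
    "set_integrable lborel {0..t} (\<lambda>s. LINT u:{0..s}|lborel. H s u * Wt u \<omega>)"
    "continuous_on {0..t} (\<lambda>\<tau>. W \<tau> \<omega>)"
    by (auto elim: continuous_on_subset)
  with m have "continuous_on {0..t} (\<lambda>\<tau>. X0 \<omega> + (LINT s:{0..\<tau>}|lborel. g (X s \<omega>))
      + J * (LINT s:{0..\<tau>}|lborel. m s) + W \<tau> \<omega> + (LINT s:{0..\<tau>}|lborel. Wt s \<omega>)
      + (LINT s:{0..\<tau>}|lborel. LINT u:{0..s}|lborel. H s u * Wt u \<omega>))"
    by (intro continuous_intros continuous_on_set_integral_Icc_upper)
  then have "continuous_on {0..t} (\<lambda>s. X s \<omega>)"
    by (rule continuous_on_cong[THEN iffD1, rotated 2]) (use elim in auto)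
  with elim show ?case by auto
qed

lemma (in prob_space) continuous_on_expectation_bounded:
  fixes F :: "'b::{first_countable_topology, t2_space} \<Rightarrow> 'a \<Rightarrow> real"
  assumes meas: "\<And>s. s \<in> S \<Longrightarrow> F s \<in> borel_measurable M"
    and paths: "AE \<omega> in M. (\<forall>s\<in>S. \<bar>F s \<omega>\<bar> \<le> B) \<and> continuous_on S (\<lambda>s. F s \<omega>)"
  shows "continuous_on S (\<lambda>s. expectation (F s))"
proof (rule continuous_on_sequentiallyI)
  fix u a assume u: "\<forall>n. u n \<in> S" and a: "a \<in> S" and lim: "u \<longlonglongrightarrow> a"
  show "(\<lambda>n. expectation (F (u n))) \<longlonglongrightarrow> expectation (F a)"
  proof (rule integral_dominated_convergence[where w="\<lambda>_. B"])
    show "AE \<omega> in M. (\<lambda>n. F (u n) \<omega>) \<longlonglongrightarrow> F a \<omega>"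
      using paths by eventually_elim (use u a lim in \<open>auto intro: continuous_on_tendsto_compose\<close>)
    show "AE \<omega> in M. norm (F (u n) \<omega>) \<le> B" for n
      using paths by eventually_elim (use u in auto)
  qed (use meas u a in auto)
qed

lemma (in prob_space) continuous_on_second_moment_bounded:
  fixes F :: "'b::{first_countable_topology, t2_space} \<Rightarrow> 'a \<Rightarrow> real"
  assumes meas: "\<And>s. s \<in> S \<Longrightarrow> F s \<in> borel_measurable M"
    and paths: "AE \<omega> in M. (\<forall>s\<in>S. \<bar>F s \<omega>\<bar> \<le> B) \<and> continuous_on S (\<lambda>s. F s \<omega>)"
  shows "continuous_on (S \<times> S) (\<lambda>p. expectation (\<lambda>\<omega>. F (fst p) \<omega> * F (snd p) \<omega>))"
proof (rule continuous_on_expectation_bounded[where B="B * B"])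
  show "(\<lambda>\<omega>. F (fst p) \<omega> * F (snd p) \<omega>) \<in> borel_measurable M" if "p \<in> S \<times> S" for p
    using meas that by (auto simp: mem_Times_iff)
  show "AE \<omega> in M. (\<forall>p\<in>S \<times> S. \<bar>F (fst p) \<omega> * F (snd p) \<omega>\<bar> \<le> B * B) \<and>
      continuous_on (S \<times> S) (\<lambda>p. F (fst p) \<omega> * F (snd p) \<omega>)"
    using paths
  proof eventually_elim
    case (elim \<omega>)
    then have "continuous_on S (\<lambda>s. F s \<omega>)"
      by simp
    then have "continuous_on (S \<times> S) (\<lambda>p. F (fst p) \<omega>)" "continuous_on (S \<times> S) (\<lambda>p. F (snd p) \<omega>)"
      by (auto intro!: continuous_on_compose2[where f="fst"] continuous_on_compose2[where f="snd"]
          continuous_on_fst continuous_on_snd continuous_on_id)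
    with elim show ?case
      by (auto simp: abs_mult intro!: mult_mono' continuous_on_mult)
  qed
qed

lemma (in prob_space) second_moment_form_nonneg:
  fixes Y :: "nat \<Rightarrow> 'a \<Rightarrow> real" and c :: "nat \<Rightarrow> real"
  assumes "\<And>i j. i < n \<Longrightarrow> j < n \<Longrightarrow> integrable M (\<lambda>\<omega>. Y i \<omega> * Y j \<omega>)"
  shows "0 \<le> (\<Sum>i<n. \<Sum>j<n. c i * c j * expectation (\<lambda>\<omega>. Y i \<omega> * Y j \<omega>))"
proof -
  have "(\<Sum>i<n. \<Sum>j<n. c i * c j * expectation (\<lambda>\<omega>. Y i \<omega> * Y j \<omega>))
      = (\<Sum>i<n. \<Sum>j<n. expectation (\<lambda>\<omega>. c i * c j * (Y i \<omega> * Y j \<omega>)))"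
    by simp
  also have "\<dots> = (\<Sum>i<n. expectation (\<lambda>\<omega>. \<Sum>j<n. c i * c j * (Y i \<omega> * Y j \<omega>)))"
    using assms by (intro sum.cong refl Bochner_Integration.integral_sum[symmetric]) auto
  also have "\<dots> = expectation (\<lambda>\<omega>. \<Sum>i<n. \<Sum>j<n. c i * c j * (Y i \<omega> * Y j \<omega>))"
    using assms by (intro Bochner_Integration.integral_sum[symmetric] integrable_sum) auto
  also have "\<dots> = expectation (\<lambda>\<omega>. (\<Sum>i<n. c i * Y i \<omega>)\<^sup>2)"
    by (simp add: power2_eq_square sum_product mult_ac)
  also have "\<dots> \<ge> 0"
    by simp
  finally show ?thesis .
qed

lemma in_L2_if_continuous_on:
  assumes "continuous_on {0..t} h"
  shows "in_L2 t h"
  unfolding in_L2_def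
proof
  show "(\<lambda>s. indicator {0..t} s * h s) \<in> borel_measurable lborel"
    using borel_measurable_continuous_on_indicator[OF _ assms] by simp
  show "set_integrable lborel {0..t} (\<lambda>s. (h s)\<^sup>2)"
    using assms by (intro borel_integrable_atLeastAtMost' continuous_intros)
qed

lemma corr_kernels_if_continuous_on:
  fixes K :: "real \<Rightarrow> real \<Rightarrow> real"
  assumes cont: "continuous_on ({0..t} \<times> {0..t}) (\<lambda>p. K (fst p) (snd p))"
    and sym: "\<And>s u. s \<in> {0..t} \<Longrightarrow> u \<in> {0..t} \<Longrightarrow> K s u = K u s"
    and psd: "\<And>(n::nat) x c. \<forall>i<n. x i \<in> {0..t} \<Longrightarrow> 0 \<le> (\<Sum>i<n. \<Sum>j<n. c i * c j * K (x i) (x j))"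
  shows "K \<in> corr_kernels t"
  unfolding corr_kernels_def
proof (intro CollectI conjI ballI sym)
  show "(\<lambda>p. indicator ({0..t} \<times> {0..t}) p * K (fst p) (snd p))
      \<in> borel_measurable (lborel \<Otimes>\<^sub>M lborel)"
    unfolding lborel_prod measurable_lborel2
    using borel_measurable_continuous_on_indicator[OF _ cont] by (simp add: closed_Times)
  have "continuous_on {0..t} (\<lambda>s. K s s)"
    by (rule continuous_on_compose2[OF cont, where f="\<lambda>s. (s, s)", simplified])
       (auto intro!: continuous_on_Pair continuous_on_id)
  then show "set_integrable lborel {0..t} (\<lambda>s. K s s)"
    by (rule borel_integrable_atLeastAtMost')
  show "\<forall>(n::nat) (x::nat \<Rightarrow> real) (c::nat \<Rightarrow> real). (\<forall>i<n. x i \<in> {0..t}) \<longrightarrow>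
      0 \<le> (\<Sum>i<n. \<Sum>j<n. c i * c j * K (x i) (x j))"
    using psd by blast
qed

lemma (in prob_space) moments_of_bounded_continuous_process:
  fixes F :: "real \<Rightarrow> 'a \<Rightarrow> real"
  assumes meas: "\<And>s. s \<in> {0..t} \<Longrightarrow> F s \<in> borel_measurable M"
    and paths: "AE \<omega> in M. (\<forall>s\<in>{0..t}. \<bar>F s \<omega>\<bar> \<le> B) \<and> continuous_on {0..t} (\<lambda>s. F s \<omega>)"
    and "0 \<le> c"
  shows "in_L2 t (\<lambda>s. expectation (F s))"
    and "(\<lambda>s u. c * expectation (\<lambda>\<omega>. F s \<omega> * F u \<omega>)) \<in> corr_kernels t"
proof -
  show "in_L2 t (\<lambda>s. expectation (F s))"
    using meas paths by (intro in_L2_if_continuous_on continuous_on_expectation_bounded)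
  have products_integrable: "integrable M (\<lambda>\<omega>. F s \<omega> * F u \<omega>)"
    if "s \<in> {0..t}" "u \<in> {0..t}" for s u
  proof (rule integrable_const_bound[where B="B * B"])
    show "AE \<omega> in M. norm (F s \<omega> * F u \<omega>) \<le> B * B"
      using paths by eventually_elim (use that in \<open>auto simp: abs_mult intro!: mult_mono'\<close>)
  qed (use meas that in auto)
  show "(\<lambda>s u. c * expectation (\<lambda>\<omega>. F s \<omega> * F u \<omega>)) \<in> corr_kernels t"
  proof (rule corr_kernels_if_continuous_on)
    show "continuous_on ({0..t} \<times> {0..t})
        (\<lambda>p. c * expectation (\<lambda>\<omega>. F (fst p) \<omega> * F (snd p) \<omega>))"
      using meas paths by (intro continuous_intros continuous_on_second_moment_bounded)
    show "c * expectation (\<lambda>\<omega>. F s \<omega> * F u \<omega>) = c * expectation (\<lambda>\<omega>. F u \<omega> * F s \<omega>)" for s u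
      by (simp add: mult.commute)
    fix n and x c' :: "nat \<Rightarrow> real"
    assume "\<forall>i<n. x i \<in> {0..t}"
    then have "0 \<le> (\<Sum>i<n. \<Sum>j<n. c' i * c' j * expectation (\<lambda>\<omega>. F (x i) \<omega> * F (x j) \<omega>))"
      by (intro second_moment_form_nonneg products_integrable) auto
    with \<open>0 \<le> c\<close> show "0 \<le> (\<Sum>i<n. \<Sum>j<n. c' i * c' j * (c * expectation (\<lambda>\<omega>. F (x i) \<omega> * F (x j) \<omega>)))"
      by (simp add: sum_distrib_left[symmetric] mult.left_commute)
  qed
qed

lemma model_f_continuous_bounded_on_state_space:
  assumes "(\<exists>\<alpha>. H_model \<alpha> f g \<mu>0 \<and> D = UNIV) \<or> (\<exists>A U. S_model A U f g \<mu>0 \<and> D = {-A<..<A})"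
  shows "continuous_on UNIV f \<and> (\<exists>B. \<forall>x\<in>D. \<bar>f x\<bar> \<le> B)"
  using assms
proof
  assume "\<exists>\<alpha>. H_model \<alpha> f g \<mu>0 \<and> D = UNIV"
  then have "continuous_on UNIV f" "bounded (range f)"
    unfolding H_model_def by auto
  then show ?thesis
    unfolding bounded_iff by auto
next
  assume "\<exists>A U. S_model A U f g \<mu>0 \<and> D = {-A<..<A}"
  then obtain A U where "S_model A U f g \<mu>0" "D = {-A<..<A}"
    by blast
  then have "f = id" "\<forall>x\<in>D. \<bar>x\<bar> \<le> A"
    unfolding S_model_def by auto
  then show ?thesis
    by auto
qed

theorem lemma6p1:
  fixes J \<sigma> T t :: real
    and f g :: "real \<Rightarrow> real" and \<mu>0 :: "real measure" and D :: "real set"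
    and m :: "real \<Rightarrow> real" and K \<kappa> :: "real \<Rightarrow> real \<Rightarrow> real"
    and M :: "'a measure" and W Wt X :: "real \<Rightarrow> 'a \<Rightarrow> real" and X0 :: "'a \<Rightarrow> real"
  assumes "\<sigma> > 0" and "T > 0" and "0 < t" and "t \<le> T"
    and model: "(\<exists>\<alpha>. H_model \<alpha> f g \<mu>0 \<and> D = UNIV) \<or>
                (\<exists>A U. S_model A U f g \<mu>0 \<and> D = {-A<..<A})"
    and m: "in_L2 t m" and K: "K \<in> corr_kernels t"
    and kappa: "is_kappa t K \<kappa>"
    and BM: "brownian M W" and init: "init_cond M X0 W \<mu>0"
    and Wt: "is_Wtilde M W t \<kappa> Wt"
    and X: "is_solution M t D g J m X0 W Wt (H_kernel \<kappa>) X"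
  shows "in_L2 t (\<lambda>s. LINT \<omega>|M. f (X s \<omega>)) \<and>
         (\<lambda>s u. \<sigma>\<^sup>2 * (LINT \<omega>|M. f (X s \<omega>) * f (X u \<omega>))) \<in> corr_kernels t"
proof -
  interpret prob_space M
    using BM unfolding brownian_def by simp
  obtain B where f_cont: "continuous_on UNIV f" and f_bound: "\<forall>x\<in>D. \<bar>f x\<bar> \<le> B"
    using model_f_continuous_bounded_on_state_space[OF model] by blast
  have "AE \<omega> in M. (\<forall>s\<in>{0..t}. X s \<omega> \<in> D) \<and> continuous_on {0..t} (\<lambda>s. X s \<omega>)"
    using BM \<open>0 < t\<close> unfolding brownian_def
    by (intro solution_paths_continuous[OF X] set_integrable_if_in_L2[OF m]) auto
  then have paths: "AE \<omega> in M. (\<forall>s\<in>{0..t}. \<bar>f (X s \<omega>)\<bar> \<le> B) \<and>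
      continuous_on {0..t} (\<lambda>s. f (X s \<omega>))"
    by eventually_elim (use f_bound f_cont in \<open>auto intro: continuous_on_compose2\<close>)
  have "(\<lambda>\<omega>. f (X s \<omega>)) \<in> borel_measurable M" if "s \<in> {0..t}" for s
    using X that borel_measurable_continuous_onI[OF f_cont] unfolding is_solution_def
    by (auto intro: measurable_compose)
  from moments_of_bounded_continuous_process[OF this paths zero_le_power2[of \<sigma>]]
  show ?thesis
    by (rule conjI)
qed

end
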